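(* Let $F=\frac19\begin{pmatrix}1&1&1\\1&1&1\\1&1&1\end{pmatrix}$ (box blur filter). Then the equation $F*X=B$ with the periodic boundary condition, for unknown $X\in\mathbb{R}^{m\times n}$, has a unique solution for every $B\in\mathbb{R}^{m\times n}$ if and only if $m,n\notin\{3l: l\in\mathbb{N}\}$.
   Context: $\mathbb{N}=\{1,2,3,\dots\}$. For $F=[f_{ij}]\in\mathbb{R}^{3\times3}$ and $X=[x_{ij}]\in\mathbb{R}^{m\times n}$, the convolution $F*X\in\mathbb{R}^{m\times n}$ is defined by $[F*X]_{ij}=\sum_{l_1=1}^3\sum_{l_2=1}^3 f_{l_1l_2}\,x_{i-l_1+2,\,j-l_2+2}$ for $1\le i\le m$, $1\le j\le n$, where the periodic boundary condition sets $x_{0j}=x_{mj}$, $x_{m+1,j}=x_{1j}$, $x_{i0}=x_{in}$, $x_{i,n+1}=x_{i1}$ (for all indices $i\in\{0,\dots,m+1\}$, $j\in\{0,\dots,n+1\}$, so corners are also determined, e.g. $x_{00}=x_{mn}$). *)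

theory Defs
  imports "HOL-Analysis.Analysis"
begin

text \<open>An m x n real matrix is represented as a function int => int => real whose
  entries are indexed by 1..m, 1..n and which is zero outside that range.\<close>
definition mats :: "nat \<Rightarrow> nat \<Rightarrow> (int \<Rightarrow> int \<Rightarrow> real) set" where
  "mats m n = {X. \<forall>i j. \<not> (1 \<le> i \<and> i \<le> int m \<and> 1 \<le> j \<and> j \<le> int n) \<longrightarrow> X i j = 0}"

text \<open>Periodic index: maps 0 to m and m+1 to 1 (and generally reduces into 1..m).\<close>
definition pidx :: "nat \<Rightarrow> int \<Rightarrow> int" where
  "pidx m k = ((k - 1) mod int m) + 1"

definition conv_per :: "nat \<Rightarrow> nat \<Rightarrow> (int \<Rightarrow> int \<Rightarrow> real) \<Rightarrow> (int \<Rightarrow> int \<Rightarrow> real) \<Rightarrow> (int \<Rightarrow> int \<Rightarrow> real)" where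
  "conv_per m n F X = (\<lambda>i j.
     if 1 \<le> i \<and> i \<le> int m \<and> 1 \<le> j \<and> j \<le> int n then
       (\<Sum>l1\<in>{1..3::int}. \<Sum>l2\<in>{1..3::int}.
          F l1 l2 * X (pidx m (i - l1 + 2)) (pidx n (j - l2 + 2)))
     else 0)"

definition box_filter :: "int \<Rightarrow> int \<Rightarrow> real" where
  "box_filter = (\<lambda>_ _. 1/9)"

end

theory Submission
  imports Defs
begin

text \<open>Extending an \<open>m \<times> n\<close> matrix periodically identifies \<open>mats m n\<close> with the doubly
  periodic functions on \<open>\<int>\<^sup>2\<close>, and turns the periodic box blur into the composition of the
  three-term moving average along the columns with the one along the rows. The two factors commute,
  so the blur is bijective iff both are, i.e. iff the moving average is bijective on \<open>m\<close>- and on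
  \<open>n\<close>-periodic sequences. If 3 divides \<open>m\<close>, the sequence \<open>1, -1, 0, 1, -1, 0, \<dots>\<close> is a
  nonzero \<open>m\<close>-periodic sequence with vanishing averages. Otherwise \<open>3 q = p m + 1\<close> for some
  \<open>p, q\<close>, and summing the averages over every third index inverts the average explicitly.\<close>

section \<open>Bijections of a set onto itself\<close>

lemma bij_betw_iff_ex1:
  assumes "f ` A \<subseteq> A"
  shows "bij_betw f A A \<longleftrightarrow> (\<forall>b\<in>A. \<exists>!a. a \<in> A \<and> f a = b)"
proof
  assume bij: "bij_betw f A A"
  show "\<forall>b\<in>A. \<exists>!a. a \<in> A \<and> f a = b"
  proof
    fix b assume "b \<in> A"
    then have "b \<in> f ` A"
      using bij by (simp add: bij_betw_def)
    then obtain a where a: "a \<in> A" "b = f a" ..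
    show "\<exists>!a. a \<in> A \<and> f a = b"
    proof (rule ex1I)
      show "a \<in> A \<and> f a = b" using a by simp
      show "a' = a" if "a' \<in> A \<and> f a' = b" for a'
        using inj_onD[OF bij_betw_imp_inj_on[OF bij]] a that by blast
    qed
  qed
next
  assume ex1: "\<forall>b\<in>A. \<exists>!a. a \<in> A \<and> f a = b"
  have "inj_on f A"
  proof (rule inj_onI)
    fix x y assume "x \<in> A" "y \<in> A" "f x = f y"
    have "f x \<in> A" using assms \<open>x \<in> A\<close> by blast
    then have "\<exists>!a. a \<in> A \<and> f a = f x"
      using ex1 by blast
    then show "x = y" using \<open>x \<in> A\<close> \<open>y \<in> A\<close> \<open>f x = f y\<close> by metis
  qed
  moreover have "A \<subseteq> f ` A"
  proof
    fix b assume "b \<in> A"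
    then obtain a where "a \<in> A" "f a = b" using ex1 by blast
    then show "b \<in> f ` A" by blast
  qed
  then have "f ` A = A" using assms by (rule subset_antisym[rotated])
  ultimately show "bij_betw f A A"
    by (rule bij_betw_imageI)
qed

lemma bij_betw_conjugate_iff:
  assumes "bij_betw h A B" and "bij_betw h' B A" and "g ` B \<subseteq> B"
  shows "bij_betw (h' \<circ> g \<circ> h) A A \<longleftrightarrow> bij_betw g B B"
proof -
  have "bij_betw g B B \<longleftrightarrow> bij_betw (h' \<circ> g) B A"
    by (rule bij_betw_comp_iff2[OF assms(2,3)])
  also have "\<dots> \<longleftrightarrow> bij_betw (h' \<circ> g \<circ> h) A A"
    by (rule bij_betw_comp_iff[OF assms(1)])
  finally show ?thesis by simp
qed

lemma bij_betw_comp_commute_iff: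
  assumes "f ` A \<subseteq> A" and "g ` A \<subseteq> A" and "\<And>x. x \<in> A \<Longrightarrow> f (g x) = g (f x)"
  shows "bij_betw (f \<circ> g) A A \<longleftrightarrow> bij_betw f A A \<and> bij_betw g A A"
proof
  assume fg: "bij_betw (f \<circ> g) A A"
  then have gf: "bij_betw (g \<circ> f) A A"
    using bij_betw_cong[of A "f \<circ> g" "g \<circ> f"] assms(3) by simp
  have inj: "inj_on f A" "inj_on g A"
    using fg gf by (auto simp: bij_betw_def dest: inj_on_imageI2)
  have "f ` g ` A = A" "g ` f ` A = A"
    using fg gf by (simp_all add: bij_betw_def image_comp)
  then have "f ` A = A" "g ` A = A"
    using assms(1,2) by blast+
  with inj show "bij_betw f A A \<and> bij_betw g A A"
    by (simp add: bij_betw_def)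
next
  assume "bij_betw f A A \<and> bij_betw g A A"
  then show "bij_betw (f \<circ> g) A A"
    using bij_betw_trans by blast
qed

section \<open>Moving averages of periodic sequences\<close>

definition periodic :: "nat \<Rightarrow> (int \<Rightarrow> 'a) set" where
  "periodic m = {x. \<forall>k. x (k + int m) = x k}"

lemma periodicD: "x \<in> periodic m \<Longrightarrow> x (k + int m) = x k"
  unfolding periodic_def by blast

lemma periodic_add_mult:
  assumes "x \<in> periodic m"
  shows "x (k + int m * s) = x k"
proof (induction s rule: int_induct[where k = 0])
  case (step1 s)
  then show ?case using periodicD[OF assms, of "k + int m * s"] by (simp add: algebra_simps)
next
  case (step2 s)
  then show ?case using periodicD[OF assms, of "k + int m * (s - 1)"] by (simp add: algebra_simps)
qed simp

lemma periodic_pidx: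
  assumes "x \<in> periodic m"
  shows "x (pidx m k) = x k"
proof -
  have "k = pidx m k + int m * ((k - 1) div int m)"
    using div_mult_mod_eq[of "k - 1" "int m"] unfolding pidx_def by (simp add: algebra_simps)
  then show ?thesis using periodic_add_mult[OF assms, of "pidx m k"] by metis
qed

lemma pidx_add_self [simp]: "pidx m (k + int m) = pidx m k"
  using mod_add_self2[of "k - 1" "int m"] unfolding pidx_def by (simp add: algebra_simps)

lemma pidx_eq_self: "1 \<le> k \<Longrightarrow> k \<le> int m \<Longrightarrow> pidx m k = k"
  unfolding pidx_def by simp

lemma pidx_bounds: "m \<ge> 1 \<Longrightarrow> 1 \<le> pidx m k \<and> pidx m k \<le> int m"
  unfolding pidx_def
  using pos_mod_bound[of "int m" "k - 1"] pos_mod_sign[of "int m" "k - 1"] by linarith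

lemma sum_periodic_window:
  fixes x :: "int \<Rightarrow> 'a::cancel_comm_monoid_add"
  assumes "x \<in> periodic m"
  shows "(\<Sum>u<m. x (j + int u)) = (\<Sum>u<m. x (int u))"
proof -
  have shift: "(\<Sum>u<m. x (j + 1 + int u)) = (\<Sum>u<m. x (j + int u))" for j
  proof -
    have "x j + (\<Sum>u<m. x (j + 1 + int u)) = (\<Sum>u<Suc m. x (j + int u))"
      by (subst sum.lessThan_Suc_shift) (simp add: algebra_simps)
    also have "\<dots> = x j + (\<Sum>u<m. x (j + int u))"
      using periodicD[OF assms, of j] by (simp add: add.commute)
    finally show ?thesis by simp
  qed
  show ?thesis
  proof (induction j rule: int_induct[where k = 0])
    case (step1 j)
    then show ?case using shift[of j] by simp
  next
    case (step2 j)
    then show ?case using shift[of "j - 1"] by simp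
  qed simp
qed

definition mean3 :: "(int \<Rightarrow> real) \<Rightarrow> int \<Rightarrow> real" where
  "mean3 x k = (x (k - 1) + x k + x (k + 1)) / 3"

lemma mean3_periodic:
  assumes "x \<in> periodic m"
  shows "mean3 x \<in> periodic m"
proof -
  have "x (k + int m - 1) = x (k - 1)" "x (k + int m + 1) = x (k + 1)" for k
    using periodicD[OF assms, of "k - 1"] periodicD[OF assms, of "k + 1"] by (simp_all add: algebra_simps)
  then show ?thesis
    using periodicD[OF assms] unfolding periodic_def mean3_def by simp
qed

lemma sum_triples:
  fixes f :: "nat \<Rightarrow> 'a::comm_monoid_add"
  shows "(\<Sum>t<q. f (3 * t) + f (3 * t + 1) + f (3 * t + 2)) = (\<Sum>u<3 * q. f u)"
proof (induction q)
  case (Suc q)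
  have "3 * Suc q = Suc (Suc (Suc (3 * q)))" by simp
  then show ?case using Suc.IH by (simp only:) (simp add: add.assoc)
qed simp

lemma sum_mean3_periodic:
  assumes "x \<in> periodic m"
  shows "(\<Sum>u<m. mean3 x (int u)) = (\<Sum>u<m. x (int u))"
proof -
  have "(\<Sum>u<m. x (int u - 1)) = (\<Sum>u<m. x (int u))" "(\<Sum>u<m. x (int u + 1)) = (\<Sum>u<m. x (int u))"
    using sum_periodic_window[OF assms, of "- 1"] sum_periodic_window[OF assms, of 1]
    by (simp_all add: add.commute)
  then show ?thesis
    unfolding mean3_def by (simp add: sum.distrib flip: sum_divide_distrib)
qed

lemma sum_periodic_window_mult:
  fixes x :: "int \<Rightarrow> real"
  assumes "x \<in> periodic m"
  shows "(\<Sum>u<p * m. x (j + int u)) = real p * (\<Sum>u<m. x (int u))"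
proof (induction p)
  case (Suc p)
  have split: "(\<Sum>u<a + b. g u) = (\<Sum>u<a. g u) + (\<Sum>u<b. g (a + u))" for a b and g :: "nat \<Rightarrow> real"
    by (induction b) (simp_all add: add.assoc)
  have "(\<Sum>u<Suc p * m. x (j + int u)) = (\<Sum>u<p * m. x (j + int u)) + (\<Sum>u<m. x ((j + int (p * m)) + int u))"
    using split[of _ "p * m" m] by (simp add: add.commute add.left_commute)
  also have "\<dots> = real p * (\<Sum>u<m. x (int u)) + (\<Sum>u<m. x (int u))"
    using Suc.IH sum_periodic_window[OF assms, of "j + int (p * m)"] by simp
  finally show ?case by (simp add: algebra_simps)
qed simp

lemma sum_periodic_window_mult_add_one:
  fixes x :: "int \<Rightarrow> real"
  assumes "x \<in> periodic m"
  shows "(\<Sum>u<p * m + 1. x (j + int u)) = real p * (\<Sum>u<m. x (int u)) + x j"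
proof -
  have "x (j + int (p * m)) = x j"
    using periodic_add_mult[OF assms, of j "int p"] by (simp add: algebra_simps)
  then show ?thesis
    by (simp add: sum_periodic_window_mult[OF assms])
qed

lemma sum_triples_window:
  "(\<Sum>t<q. x (j + 3 * int t) + x (j + 3 * int t + 1) + x (j + 3 * int t + 2)) = (\<Sum>u<3 * q. x (j + int u))"
  using sum_triples[of "\<lambda>u. x (j + int u)" q] by (simp add: algebra_simps)

lemma sum_mean3_triples:
  "3 * (\<Sum>t<q. mean3 x (j + 1 + 3 * int t)) = (\<Sum>u<3 * q. x (j + int u))"
  unfolding sum_triples_window[symmetric] sum_distrib_left
  by (rule sum.cong) (simp_all add: mean3_def algebra_simps)

text \<open>For \<open>3 q = p m + 1\<close>, the sum of \<open>b = mean3 x\<close> over \<open>j + 1, j + 4, \<dots>, j + 3 q - 2\<close>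
  is a third of the sum of \<open>p m + 1\<close> consecutive values of \<open>x\<close> starting at \<open>j\<close>, i.e. of
  \<open>p\<close> full periods plus \<open>x j\<close>; subtracting the periods recovers \<open>x j\<close>.\<close>
definition mean3_inv :: "nat \<Rightarrow> nat \<Rightarrow> nat \<Rightarrow> (int \<Rightarrow> real) \<Rightarrow> int \<Rightarrow> real" where
  "mean3_inv m p q b j = 3 * (\<Sum>t<q. b (j + 1 + 3 * int t)) - real p * (\<Sum>u<m. b (int u))"

lemma mean3_inv_periodic:
  assumes "b \<in> periodic m"
  shows "mean3_inv m p q b \<in> periodic m"
proof -
  have "b (k + int m + 1 + 3 * int t) = b (k + 1 + 3 * int t)" for k t
    using periodicD[OF assms, of "k + 1 + 3 * int t"] by (simp add: algebra_simps)
  then show ?thesis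
    unfolding periodic_def mean3_inv_def by simp
qed

lemma mean3_inv_mean3:
  assumes "x \<in> periodic m" and "3 * q = p * m + 1"
  shows "mean3_inv m p q (mean3 x) = x"
proof
  fix j
  show "mean3_inv m p q (mean3 x) j = x j"
    unfolding mean3_inv_def sum_mean3_triples assms(2) sum_periodic_window_mult_add_one[OF assms(1)]
      sum_mean3_periodic[OF assms(1)]
    by simp
qed

lemma mean3_mean3_inv:
  assumes "b \<in> periodic m" and "3 * q = p * m + 1"
  shows "mean3 (mean3_inv m p q b) = b"
proof
  fix j
  have "mean3 (mean3_inv m p q b) j
      = (\<Sum>t<q. b (j + 3 * int t) + b (j + 3 * int t + 1) + b (j + 3 * int t + 2)) - real p * (\<Sum>u<m. b (int u))"
    by (simp add: mean3_def mean3_inv_def sum.distrib field_simps)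
  then show "mean3 (mean3_inv m p q b) j = b j"
    unfolding sum_triples_window assms(2) sum_periodic_window_mult_add_one[OF assms(1)] by simp
qed

lemma obtain_inverse_3_mod:
  fixes m :: nat
  assumes "\<not> 3 dvd m"
  obtains p q where "3 * q = p * m + 1"
proof -
  have "m mod 3 = 1 \<or> m mod 3 = 2" using assms by presburger
  then show ?thesis
  proof
    assume "m mod 3 = 1"
    then have "3 * ((2 * m + 1) div 3) = 2 * m + 1" by presburger
    then show ?thesis by (rule that)
  next
    assume "m mod 3 = 2"
    then have "3 * ((m + 1) div 3) = 1 * m + 1" by presburger
    then show ?thesis by (rule that)
  qed
qed

lemma not_inj_on_mean3:
  assumes "3 dvd m"
  shows "\<not> inj_on mean3 (periodic m)"
proof
  assume inj: "inj_on mean3 (periodic m)"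
  define w :: "int \<Rightarrow> real" where
    "w k = (if k mod 3 = 0 then 1 else if k mod 3 = 1 then - 1 else 0)" for k
  have "(k + int m) mod 3 = k mod 3" for k
    using assms by presburger
  then have w: "w \<in> periodic m"
    unfolding periodic_def w_def by simp
  have mean3_w: "mean3 w = mean3 (\<lambda>_. 0)"
  proof
    fix k :: int
    have "k mod 3 = 0 \<and> (k - 1) mod 3 = 2 \<and> (k + 1) mod 3 = 1 \<or>
          k mod 3 = 1 \<and> (k - 1) mod 3 = 0 \<and> (k + 1) mod 3 = 2 \<or>
          k mod 3 = 2 \<and> (k - 1) mod 3 = 1 \<and> (k + 1) mod 3 = 0"
      by presburger
    then show "mean3 w k = mean3 (\<lambda>_. 0) k"
      unfolding mean3_def w_def by auto
  qed
  have "(\<lambda>_. 0) \<in> periodic m"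
    unfolding periodic_def by simp
  with inj mean3_w w have "w = (\<lambda>_. 0)"
    by (rule inj_onD)
  then show False
    using fun_cong[of w _ 0] unfolding w_def by simp
qed

lemma bij_betw_mean3_iff: "bij_betw mean3 (periodic m) (periodic m) \<longleftrightarrow> \<not> 3 dvd m"
proof
  show "\<not> 3 dvd m" if "bij_betw mean3 (periodic m) (periodic m)"
    using not_inj_on_mean3 bij_betw_imp_inj_on[OF that] by blast
next
  assume "\<not> 3 dvd m"
  then obtain p q where pq: "3 * q = p * m + 1"
    by (rule obtain_inverse_3_mod)
  show "bij_betw mean3 (periodic m) (periodic m)"
    by (rule bij_betw_byWitness[where f' = "mean3_inv m p q"])
      (auto simp: mean3_inv_mean3[OF _ pq] mean3_mean3_inv[OF _ pq] mean3_periodic mean3_inv_periodic)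
qed

section \<open>Doubly periodic functions\<close>

definition dperiodic :: "nat \<Rightarrow> nat \<Rightarrow> (int \<Rightarrow> int \<Rightarrow> 'a) set" where
  "dperiodic m n = {Y \<in> periodic m. \<forall>i. Y i \<in> periodic n}"

definition swap_args :: "('a \<Rightarrow> 'b \<Rightarrow> 'c) \<Rightarrow> 'b \<Rightarrow> 'a \<Rightarrow> 'c" where
  "swap_args Y = (\<lambda>j i. Y i j)"

definition on_rows :: "('a \<Rightarrow> 'b) \<Rightarrow> (int \<Rightarrow> 'a) \<Rightarrow> int \<Rightarrow> 'b" where
  "on_rows L Y = (\<lambda>i. L (Y i))"

definition on_cols :: "((int \<Rightarrow> 'a) \<Rightarrow> int \<Rightarrow> 'b) \<Rightarrow> (int \<Rightarrow> int \<Rightarrow> 'a) \<Rightarrow> int \<Rightarrow> int \<Rightarrow> 'b" where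
  "on_cols L Y = swap_args (on_rows L (swap_args Y))"

lemma swap_args_swap_args [simp]: "swap_args (swap_args Y) = Y"
  unfolding swap_args_def by simp

lemma swap_args_dperiodic: "Y \<in> dperiodic m n \<Longrightarrow> swap_args Y \<in> dperiodic n m"
  unfolding dperiodic_def periodic_def swap_args_def by (simp add: fun_eq_iff)

lemma bij_betw_swap_args: "bij_betw swap_args (dperiodic m n) (dperiodic n m)"
  by (rule bij_betw_byWitness[where f' = swap_args]) (auto intro: swap_args_dperiodic)

lemma on_rows_dperiodic:
  assumes "\<And>x. x \<in> periodic n \<Longrightarrow> L x \<in> periodic n" and "Y \<in> dperiodic m n"
  shows "on_rows L Y \<in> dperiodic m n"
proof -
  have "L (Y i) \<in> periodic n" for i
    using assms by (auto simp: dperiodic_def)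
  moreover have "Y (i + int m) = Y i" for i
    using assms(2) by (simp add: dperiodic_def periodic_def)
  ultimately show ?thesis
    by (simp add: dperiodic_def periodic_def on_rows_def)
qed

lemma on_cols_dperiodic:
  assumes "\<And>x. x \<in> periodic m \<Longrightarrow> L x \<in> periodic m" and "Y \<in> dperiodic m n"
  shows "on_cols L Y \<in> dperiodic m n"
  unfolding on_cols_def
  by (intro swap_args_dperiodic on_rows_dperiodic[OF assms(1)] swap_args_dperiodic[OF assms(2)])

lemma bij_betw_on_rowsI:
  assumes bij: "bij_betw L (periodic n) (periodic n)"
  shows "bij_betw (on_rows L) (dperiodic m n) (dperiodic m n)"
proof -
  let ?L' = "inv_into (periodic n) L"
  have bij': "bij_betw ?L' (periodic n) (periodic n)"
    using bij by (rule bij_betw_inv_into)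
  show ?thesis
  proof (rule bij_betw_byWitness[where f' = "on_rows ?L'"])
    show "\<forall>Y \<in> dperiodic m n. on_rows ?L' (on_rows L Y) = Y"
      using bij_betw_inv_into_left[OF bij] unfolding on_rows_def dperiodic_def by auto
    show "\<forall>Y \<in> dperiodic m n. on_rows L (on_rows ?L' Y) = Y"
      using bij_betw_inv_into_right[OF bij] unfolding on_rows_def dperiodic_def by auto
    show "on_rows L ` dperiodic m n \<subseteq> dperiodic m n"
      by (auto intro: on_rows_dperiodic bij_betw_apply[OF bij])
    show "on_rows ?L' ` dperiodic m n \<subseteq> dperiodic m n"
      by (auto intro: on_rows_dperiodic bij_betw_apply[OF bij'])
  qed
qed

lemma bij_betw_on_rowsD:
  fixes L :: "(int \<Rightarrow> 'a) \<Rightarrow> int \<Rightarrow> 'a"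
  assumes bij: "bij_betw (on_rows L) (dperiodic m n) (dperiodic m n)"
  shows "bij_betw L (periodic n) (periodic n)"
proof (rule bij_betw_imageI)
  have const_row: "(\<lambda>_. x) \<in> dperiodic m n \<longleftrightarrow> x \<in> periodic n" for x :: "int \<Rightarrow> 'a"
    unfolding dperiodic_def periodic_def by simp
  have on_rows_const: "on_rows L (\<lambda>_. x) = (\<lambda>_. L x)" for x
    unfolding on_rows_def ..
  show "inj_on L (periodic n)"
  proof (rule inj_onI)
    fix x y assume "x \<in> periodic n" "y \<in> periodic n" "L x = L y"
    then have "(\<lambda>_::int. x) = (\<lambda>_. y)"
      using inj_onD[OF bij_betw_imp_inj_on[OF bij], of "\<lambda>_. x" "\<lambda>_. y"] const_row on_rows_const
      by simp
    then show "x = y" by (rule fun_cong)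
  qed
  show "L ` periodic n = periodic n"
  proof (intro equalityI subsetI)
    fix b assume "b \<in> L ` periodic n"
    then obtain x where "x \<in> periodic n" "b = L x" ..
    then have "(\<lambda>_. b) \<in> dperiodic m n"
      using bij_betw_apply[OF bij, of "\<lambda>_. x"] const_row on_rows_const by simp
    then show "b \<in> periodic n"
      using const_row by simp
  next
    fix b :: "int \<Rightarrow> 'a"
    assume "b \<in> periodic n"
    then have "(\<lambda>_. b) \<in> on_rows L ` dperiodic m n"
      using bij_betw_imp_surj_on[OF bij] const_row by simp
    then obtain Y where Y: "Y \<in> dperiodic m n" "(\<lambda>_. b) = on_rows L Y" ..
    then have "b = L (Y 0)"
      using fun_cong[OF Y(2), of 0] by (simp add: on_rows_def)
    moreover have "Y 0 \<in> periodic n"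
      using Y(1) by (simp add: dperiodic_def)
    ultimately show "b \<in> L ` periodic n" by simp
  qed
qed

lemma bij_betw_on_rows_iff:
  fixes L :: "(int \<Rightarrow> 'a) \<Rightarrow> int \<Rightarrow> 'a"
  shows "bij_betw (on_rows L) (dperiodic m n) (dperiodic m n) \<longleftrightarrow> bij_betw L (periodic n) (periodic n)"
  using bij_betw_on_rowsI bij_betw_on_rowsD by blast

lemma on_rows_eq_swap_args_on_cols: "on_rows L = swap_args \<circ> on_cols L \<circ> swap_args"
  unfolding on_cols_def by (simp add: fun_eq_iff)

lemma bij_betw_on_cols_iff:
  fixes L :: "(int \<Rightarrow> 'a) \<Rightarrow> int \<Rightarrow> 'a"
  shows "bij_betw (on_cols L) (dperiodic m n) (dperiodic m n) \<longleftrightarrow> bij_betw L (periodic m) (periodic m)"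
proof -
  have "bij_betw (on_cols L) (dperiodic m n) (dperiodic m n) \<longleftrightarrow>
        bij_betw (on_rows L) (dperiodic n m) (dperiodic n m)"
  proof
    assume "bij_betw (on_cols L) (dperiodic m n) (dperiodic m n)"
    from bij_betw_trans[OF bij_betw_trans[OF bij_betw_swap_args this] bij_betw_swap_args]
    show "bij_betw (on_rows L) (dperiodic n m) (dperiodic n m)"
      by (simp add: on_rows_eq_swap_args_on_cols comp_assoc)
  next
    assume "bij_betw (on_rows L) (dperiodic n m) (dperiodic n m)"
    from bij_betw_trans[OF bij_betw_trans[OF bij_betw_swap_args this] bij_betw_swap_args]
    show "bij_betw (on_cols L) (dperiodic m n) (dperiodic m n)"
      by (simp add: on_cols_def[abs_def] comp_def)
  qed
  then show ?thesis
    by (simp add: bij_betw_on_rows_iff)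
qed

lemma on_rows_on_cols_mean3: "on_rows mean3 (on_cols mean3 Y) = on_cols mean3 (on_rows mean3 Y)"
  unfolding on_rows_def on_cols_def swap_args_def mean3_def by (simp add: fun_eq_iff field_simps)

lemma bij_betw_box_mean_iff:
  "bij_betw (on_cols mean3 \<circ> on_rows mean3) (dperiodic m n) (dperiodic m n) \<longleftrightarrow> \<not> 3 dvd m \<and> \<not> 3 dvd n"
proof -
  have "on_cols mean3 ` dperiodic m n \<subseteq> dperiodic m n" "on_rows mean3 ` dperiodic m n \<subseteq> dperiodic m n"
    by (auto intro: on_cols_dperiodic on_rows_dperiodic mean3_periodic)
  then have "bij_betw (on_cols mean3 \<circ> on_rows mean3) (dperiodic m n) (dperiodic m n) \<longleftrightarrow>
      bij_betw (on_cols mean3) (dperiodic m n) (dperiodic m n) \<and> bij_betw (on_rows mean3) (dperiodic m n) (dperiodic m n)"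
    by (rule bij_betw_comp_commute_iff) (simp add: on_rows_on_cols_mean3)
  also have "\<dots> \<longleftrightarrow> \<not> 3 dvd m \<and> \<not> 3 dvd n"
    by (simp add: bij_betw_on_cols_iff bij_betw_on_rows_iff bij_betw_mean3_iff)
  finally show ?thesis .
qed

section \<open>Matrices and the periodic box blur\<close>

definition periodic_extension :: "nat \<Rightarrow> nat \<Rightarrow> (int \<Rightarrow> int \<Rightarrow> 'a) \<Rightarrow> int \<Rightarrow> int \<Rightarrow> 'a" where
  "periodic_extension m n X = (\<lambda>i j. X (pidx m i) (pidx n j))"

definition mat_restrict :: "nat \<Rightarrow> nat \<Rightarrow> (int \<Rightarrow> int \<Rightarrow> real) \<Rightarrow> int \<Rightarrow> int \<Rightarrow> real" where
  "mat_restrict m n Y = (\<lambda>i j. if 1 \<le> i \<and> i \<le> int m \<and> 1 \<le> j \<and> j \<le> int n then Y i j else 0)"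

lemma periodic_extension_dperiodic: "periodic_extension m n X \<in> dperiodic m n"
  unfolding periodic_extension_def dperiodic_def periodic_def by simp

lemma mat_restrict_mats: "mat_restrict m n Y \<in> mats m n"
  unfolding mat_restrict_def mats_def by simp

lemma mat_restrict_periodic_extension:
  "X \<in> mats m n \<Longrightarrow> mat_restrict m n (periodic_extension m n X) = X"
  unfolding mats_def mat_restrict_def periodic_extension_def by (auto simp: fun_eq_iff pidx_eq_self)

lemma periodic_extension_mat_restrict:
  assumes "m \<ge> 1" and "n \<ge> 1" and Y: "Y \<in> dperiodic m n"
  shows "periodic_extension m n (mat_restrict m n Y) = Y"
proof (intro ext)
  fix i j
  have "periodic_extension m n (mat_restrict m n Y) i j = Y (pidx m i) (pidx n j)"
    unfolding periodic_extension_def mat_restrict_def using pidx_bounds assms(1,2) by simp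
  also have "\<dots> = Y i (pidx n j)"
    using periodic_pidx[of Y m i] Y unfolding dperiodic_def by simp
  also have "\<dots> = Y i j"
    using periodic_pidx[of "Y i" n j] Y unfolding dperiodic_def by simp
  finally show "periodic_extension m n (mat_restrict m n Y) i j = Y i j" .
qed

lemma conv_per_box_filter:
  "conv_per m n box_filter = mat_restrict m n \<circ> (on_cols mean3 \<circ> on_rows mean3) \<circ> periodic_extension m n"
proof -
  have "{1..3::int} = {1, 2, 3}" by auto
  then show ?thesis
    unfolding conv_per_def mat_restrict_def on_cols_def on_rows_def swap_args_def mean3_def
      periodic_extension_def box_filter_def
    by (simp add: fun_eq_iff field_simps)
qed

lemma bij_betw_conv_per_box_filter_iff:
  assumes "m \<ge> 1" and "n \<ge> 1"
  shows "bij_betw (conv_per m n box_filter) (mats m n) (mats m n) \<longleftrightarrow> \<not> 3 dvd m \<and> \<not> 3 dvd n"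
proof -
  have "bij_betw (periodic_extension m n) (mats m n) (dperiodic m n)"
    "bij_betw (mat_restrict m n) (dperiodic m n) (mats m n)"
    using assms by (auto intro!: bij_betw_byWitness mat_restrict_periodic_extension
        periodic_extension_mat_restrict periodic_extension_dperiodic mat_restrict_mats)
  moreover have "(on_cols mean3 \<circ> on_rows mean3) ` dperiodic m n \<subseteq> dperiodic m n"
    by (auto intro!: on_cols_dperiodic on_rows_dperiodic mean3_periodic)
  ultimately show ?thesis
    unfolding conv_per_box_filter by (simp add: bij_betw_conjugate_iff bij_betw_box_mean_iff)
qed

theorem corollary2:
  fixes m n :: nat
  assumes "m \<ge> 1" and "n \<ge> 1"
  shows "(\<forall>B \<in> mats m n. \<exists>!X. X \<in> mats m n \<and> conv_per m n box_filter X = B)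
     \<longleftrightarrow> (\<not> (\<exists>l::nat. l \<ge> 1 \<and> m = 3 * l) \<and> \<not> (\<exists>l::nat. l \<ge> 1 \<and> n = 3 * l))"
proof -
  have "conv_per m n box_filter ` mats m n \<subseteq> mats m n"
    unfolding conv_per_box_filter by (auto intro: mat_restrict_mats)
  then have "(\<forall>B \<in> mats m n. \<exists>!X. X \<in> mats m n \<and> conv_per m n box_filter X = B)
      \<longleftrightarrow> bij_betw (conv_per m n box_filter) (mats m n) (mats m n)"
    by (rule bij_betw_iff_ex1[symmetric])
  also have "\<dots> \<longleftrightarrow> \<not> 3 dvd m \<and> \<not> 3 dvd n"
    using assms by (rule bij_betw_conv_per_box_filter_iff)
  also have "\<dots> \<longleftrightarrow> \<not> (\<exists>l::nat. l \<ge> 1 \<and> m = 3 * l) \<and> \<not> (\<exists>l::nat. l \<ge> 1 \<and> n = 3 * l)"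
    using assms by presburger
  finally show ?thesis .
qed

end
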